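(* Let $\mathbf{C}$ be the Cantor set with a fixed compatible metric $\mathrm{dist}$, let $X \subset \mathbf{C}$, and let $f : X \to Y$ be a continuous clopen-LC function from $X$ onto $Y \subset \mathbf{C}$ such that $f^{-1}(y)$ is compact for every $y \in Y$. For $n = 1,2,\dots$, let $X_n$ be the union of all fibers $f^{-1}(y)$, $y \in Y$, for which there exist a sequence $y_k \to y$ in $Y$ with $y_k \neq y$ for all $k$ and $y_k \neq y_j$ for $k\ne j$, points $x_k \in f^{-1}(y_k)$, and a point $\tilde{x}_y \in \mathbf{C}$ with $x_k \to \tilde{x}_y$ and $\mathrm{dist}(\tilde{x}_y, f^{-1}(y)) > 1/n$; let $Y_n = f(X_n)$. Then for every $n \ge 1$ the restriction $g_n = f|_{f^{-1}(\mathrm{cl}_Y Y_n)} : f^{-1}(\mathrm{cl}_Y Y_n) \to \mathrm{cl}_Y Y_n$ is an open function.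
   Context: A subset of a topological space is an LC-set if it is the intersection of an open set and a closed set. A function is open if it maps open sets to open sets of its image space. A function $f : X \to Y$ is clopen-LC if for every subset $U \subset X$ that is clopen in $X$, the image $f(U)$ is an LC-set in $Y$. $\mathrm{cl}_Y$ denotes closure in $Y$. *)

theory Defs
  imports "HOL-Analysis.Analysis"
begin

definition cantor_set :: "real set" where
  "cantor_set = range (\<lambda>d::nat \<Rightarrow> bool. \<Sum>i. (if d i then 2 else 0) / 3 ^ Suc i)"

definition lc_set :: "'a topology \<Rightarrow> 'a set \<Rightarrow> bool" where
  "lc_set T S \<longleftrightarrow> (\<exists>V F. openin T V \<and> closedin T F \<and> S = V \<inter> F)"

definition clopen_LC :: "'a topology \<Rightarrow> 'b topology \<Rightarrow> ('a \<Rightarrow> 'b) \<Rightarrow> bool" where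
  "clopen_LC TX TY f \<longleftrightarrow>
     (\<forall>U. openin TX U \<and> closedin TX U \<longrightarrow> lc_set TY (f ` U))"

definition bad_part :: "'a::metric_space set \<Rightarrow> 'a set \<Rightarrow> 'a set \<Rightarrow> ('a \<Rightarrow> 'a) \<Rightarrow> nat \<Rightarrow> 'a set" where
  "bad_part C X Y f n = (\<Union>y \<in> {y \<in> Y. \<exists>yk xk xt.
        (\<forall>k. yk k \<in> Y \<and> yk k \<noteq> y) \<and> inj yk \<and> yk \<longlonglongrightarrow> y \<and>
        (\<forall>k. xk k \<in> X \<and> f (xk k) = yk k) \<and>
        xt \<in> C \<and> xk \<longlonglongrightarrow> xt \<and>
        infdist xt {x \<in> X. f x = y} > 1 / real n}. {x \<in> X. f x = y})"

end

theory Submission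
  imports Defs
begin

(* Write B = X_n and Z = Y \<inter> cl f(B).  Let U be open in the preimage of Z and x \<in> U.
   Since X is zero-dimensional, x has a small clopen neighbourhood K in X, and it
   suffices to show that f(K) contains every point of Z near f x.  Otherwise points
   w_j \<in> f(B) - f(K) converge to f x.  Each w_j has a witness sequence in X whose images
   tend to w_j and which converges to a point xt_j at distance > 1/n from the fibre over
   w_j; by compactness of C the xt_j may be assumed to converge to some x0.  Take a clopen
   piece Q of X near x0.  The image f(K \<union> Q) is an LC-set V \<inter> F; the w_j eventually lie
   in V, and their witnesses eventually lie in Q, so w_j \<in> F.  Hence w_j \<in> f(Q), i.e. the
   fibre over w_j meets Q, which is within 1/n of xt_j: a contradiction. *)

definition ternary_digit :: "(nat \<Rightarrow> bool) \<Rightarrow> nat \<Rightarrow> real" where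
  "ternary_digit d i = (if d i then 2 else 0) / 3 ^ Suc i"

definition cantor_map :: "(nat \<Rightarrow> bool) \<Rightarrow> real" where
  "cantor_map d = (\<Sum>i. ternary_digit d i)"

lemma cantor_set_eq_range: "cantor_set = range cantor_map"
  unfolding cantor_set_def cantor_map_def ternary_digit_def by simp

text \<open>The tail sums of the maximal expansion 0.222..., which bound all tail errors.\<close>
lemma geometric_tail:
  "summable (\<lambda>j. 2 / 3 ^ (j + k + 1) :: real) \<and> (\<Sum>j. 2 / 3 ^ (j + k + 1) :: real) = 1 / 3 ^ k"
proof -
  have eq: "(\<lambda>j. 2 / 3 ^ (j + k + 1) :: real) = (\<lambda>j. (2 / 3 ^ (k + 1)) * (1/3) ^ j)"
    by (auto simp: power_add power_divide field_simps)
  have geo: "summable (\<lambda>j. (1/3::real) ^ j)" by (rule summable_geometric) simp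
  have "(\<Sum>j. (2 / 3 ^ (k + 1)) * (1/3::real) ^ j) = (2 / 3 ^ (k + 1)) * (\<Sum>j. (1/3::real) ^ j)"
    using geo by (rule suminf_mult)
  also have "\<dots> = 1 / 3 ^ k" by (simp add: suminf_geometric)
  finally show ?thesis unfolding eq using summable_mult[OF geo] by simp
qed

lemma ternary_digit_bounds: "0 \<le> ternary_digit d i" "ternary_digit d i \<le> 2 / 3 ^ Suc i"
  by (auto simp: ternary_digit_def)

lemma ternary_digit_summable: "summable (ternary_digit d)"
proof (rule summable_comparison_test')
  show "summable (\<lambda>j. 2 / 3 ^ (j + 0 + 1) :: real)" using geometric_tail[of 0] by blast
  show "norm (ternary_digit d i) \<le> 2 / 3 ^ (i + 0 + 1)" for i using ternary_digit_bounds[of d i] by simp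
qed

lemma tail_difference_bound:
  "\<bar>\<Sum>j. ternary_digit e (j + k) - ternary_digit d (j + k)\<bar> \<le> 1 / 3 ^ k"
proof -
  have "norm (\<Sum>j. ternary_digit e (j + k) - ternary_digit d (j + k)) \<le> (\<Sum>j. 2 / 3 ^ (j + k + 1))"
  proof (rule norm_suminf_le)
    show "summable (\<lambda>j. 2 / 3 ^ (j + k + 1) :: real)" using geometric_tail by blast
    show "norm (ternary_digit e (j + k) - ternary_digit d (j + k)) \<le> 2 / 3 ^ (j + k + 1)" for j
      using ternary_digit_bounds[of e "j+k"] ternary_digit_bounds[of d "j+k"] by auto
  qed
  then show ?thesis using geometric_tail[of k] by simp
qed

lemma cantor_map_diff:
  assumes "\<forall>i<k. e i = d i"
  shows "cantor_map e - cantor_map d = (\<Sum>j. ternary_digit e (j + k) - ternary_digit d (j + k))"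
proof -
  have s: "summable (\<lambda>i. ternary_digit e i - ternary_digit d i)"
    by (intro summable_diff ternary_digit_summable)
  have "cantor_map e - cantor_map d = (\<Sum>i. ternary_digit e i - ternary_digit d i)"
    unfolding cantor_map_def by (intro suminf_diff ternary_digit_summable)
  also have "\<dots> = (\<Sum>j. ternary_digit e (j + k) - ternary_digit d (j + k))
                  + (\<Sum>i<k. ternary_digit e i - ternary_digit d i)"
    using suminf_split_initial_segment[OF s, of k] by simp
  also have "(\<Sum>i<k. ternary_digit e i - ternary_digit d i) = 0"
    using assms by (auto simp: ternary_digit_def)
  finally show ?thesis by simp
qed

lemma cantor_map_close:
  assumes "\<forall>i<k. e i = d i" shows "\<bar>cantor_map e - cantor_map d\<bar> \<le> 1 / 3 ^ k"
  using cantor_map_diff[OF assms] tail_difference_bound by simp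

text \<open>At the first differing digit the sequence with digit 2 gives the larger point,
  since the remaining tail is worth at most half that digit.\<close>
lemma cantor_map_less:
  assumes "\<forall>i<k. e i = d i" and "e k" and "\<not> d k"
  shows "cantor_map d < cantor_map e"
proof -
  let ?g = "\<lambda>j. ternary_digit e (j + k) - ternary_digit d (j + k)"
  let ?rest = "\<Sum>j. ternary_digit e (j + Suc k) - ternary_digit d (j + Suc k)"
  have "summable ?g"
    using summable_diff[OF ternary_digit_summable ternary_digit_summable, of e d]
      summable_iff_shift[of "\<lambda>i. ternary_digit e i - ternary_digit d i" k] by simp
  then have "suminf ?g = ?g 0 + ?rest"
    using suminf_split_head[of ?g] by simp
  moreover have "?g 0 = 2 * (1 / 3 ^ Suc k)" using assms by (simp add: ternary_digit_def)
  moreover have "\<bar>?rest\<bar> \<le> 1 / 3 ^ Suc k" by (rule tail_difference_bound)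
  moreover have "(0::real) < 1 / 3 ^ Suc k" by simp
  ultimately have "suminf ?g > 0" by (simp only: abs_le_iff) linarith
  then show ?thesis using cantor_map_diff[OF assms(1)] by simp
qed

lemma inj_cantor_map: "inj cantor_map"
proof (rule injI)
  fix d e assume eq: "cantor_map d = cantor_map e"
  show "d = e"
  proof (rule ccontr)
    assume "d \<noteq> e"
    then have ex: "\<exists>i. d i \<noteq> e i" by auto
    define k where "k = (LEAST i. d i \<noteq> e i)"
    have k: "d k \<noteq> e k" unfolding k_def by (rule LeastI_ex[OF ex])
    have "d i = e i" if "i < k" for i
      using not_less_Least[OF that[unfolded k_def]] by blast
    then have prefix: "\<forall>i<k. e i = d i" "\<forall>i<k. d i = e i" by auto
    show False
      using cantor_map_less[OF prefix(1)] cantor_map_less[OF prefix(2)] k eq by (cases "e k") auto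
  qed
qed

text \<open>The map is continuous for the product topology, being a uniform limit of
  finite partial sums (Weierstrass M-test).\<close>
lemma continuous_cantor_map: "continuous_on UNIV cantor_map"
proof -
  have "uniform_limit UNIV (\<lambda>n d. \<Sum>i<n. ternary_digit d i) cantor_map sequentially"
    unfolding cantor_map_def
  proof (rule Weierstrass_m_test)
    show "summable (\<lambda>j. 2 / 3 ^ (j + 0 + 1) :: real)" using geometric_tail[of 0] by blast
    show "norm (ternary_digit d i) \<le> 2 / 3 ^ (i + 0 + 1)" for i d
      using ternary_digit_bounds[of d i] by simp
  qed
  moreover have "continuous_on UNIV (\<lambda>d. ternary_digit d i)" for i
  proof -
    have "continuous_on UNIV ((\<lambda>b::bool. (if b then 2 else 0) / 3 ^ Suc i :: real) \<circ> (\<lambda>d. d i))"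
      by (intro continuous_on_compose) auto
    then show ?thesis by (simp add: ternary_digit_def o_def)
  qed
  ultimately show ?thesis
    by (intro uniform_limit_theorem) (auto intro!: always_eventually continuous_on_sum)
qed

text \<open>Tychonoff: the space of binary sequences is compact.\<close>
lemma compact_sequence_space: "compact (UNIV :: (nat \<Rightarrow> bool) set)"
proof -
  have "compact_space (product_topology (\<lambda>i::nat. euclidean :: bool topology) UNIV)"
    unfolding compact_space_product_topology
    by (simp add: compact_space_def finite_imp_compact)
  then show ?thesis
    by (simp only: euclidean_product_topology compact_space_def) simp
qed

lemma compact_cantor_map_image:
  assumes "closed A" shows "compact (cantor_map ` A)"
proof -
  have "compact A" using closed_Int_compact[OF assms compact_sequence_space] by simp
  then show ?thesis
    using continuous_on_subset[OF continuous_cantor_map] compact_continuous_image by blast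
qed

lemma compact_cantor_set: "compact cantor_set"
  unfolding cantor_set_eq_range by (rule compact_cantor_map_image) simp

lemma cylinder_clopen:
  "open {e::nat\<Rightarrow>bool. \<forall>i<k. e i = d i} \<and> closed {e::nat\<Rightarrow>bool. \<forall>i<k. e i = d i}"
proof -
  have eq: "{e::nat\<Rightarrow>bool. \<forall>i<k. e i = d i} = (\<Inter>i\<in>{..<k}. (\<lambda>e. e i) -` {d i})" by auto
  have c: "continuous_on UNIV (\<lambda>e::nat\<Rightarrow>bool. e i)" for i by simp
  have "open ((\<lambda>e::nat\<Rightarrow>bool. e i) -` {d i})" "closed ((\<lambda>e::nat\<Rightarrow>bool. e i) -` {d i})" for i
    by (rule open_vimage[OF open_discrete c], rule closed_vimage[OF _ c]) simp
  then show ?thesis unfolding eq by (auto intro!: open_INT closed_INT)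
qed

text \<open>The Cantor set is zero-dimensional: the images of cylinder sets are clopen, since
  the map is injective with closed images, and they are small by the closeness bound.\<close>
lemma cantor_set_zero_dimensional: "top_of_set cantor_set dim_le 0"
  unfolding dimension_le_0_neighbourhood_base_of_clopen neighbourhood_base_of
proof (intro allI impI)
  fix W x assume "openin (top_of_set cantor_set) W \<and> x \<in> W"
  then have W: "openin (top_of_set cantor_set) W" and xW: "x \<in> W" by auto
  then obtain \<epsilon> where e: "\<epsilon> > 0"
    and eW: "\<And>y. y \<in> cantor_set \<Longrightarrow> dist y x < \<epsilon> \<Longrightarrow> y \<in> W"
    by (force simp: openin_euclidean_subtopology_iff)
  have "x \<in> cantor_set" using W xW openin_imp_subset by blast
  then obtain d where xd: "x = cantor_map d" unfolding cantor_set_eq_range by blast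
  obtain k where k: "(1/3::real) ^ k < \<epsilon>" using real_arch_pow_inv[OF e, of "1/3"] by auto
  define A where "A = {e::nat\<Rightarrow>bool. \<forall>i<k. e i = d i}"
  define K where "K = cantor_map ` A"
  have KW: "K \<subseteq> W"
  proof
    fix y assume "y \<in> K"
    then obtain e where "e \<in> A" "y = cantor_map e" unfolding K_def by auto
    then have "\<bar>y - x\<bar> \<le> 1 / 3 ^ k" using cantor_map_close xd unfolding A_def by auto
    then show "y \<in> W"
      using eW k \<open>y = cantor_map e\<close> by (simp add: cantor_set_eq_range dist_real_def power_one_over)
  qed
  have xK: "x \<in> K" unfolding K_def A_def xd by auto
  have "closed A" "closed (- A)" using cylinder_clopen unfolding A_def by auto
  then have "closed K" "closed (cantor_map ` (- A))"
    unfolding K_def using compact_cantor_map_image compact_imp_closed by blast+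
  moreover have "cantor_set - K = cantor_map ` (- A)"
    unfolding K_def cantor_set_eq_range using inj_cantor_map by (auto simp: inj_eq)
  moreover have "K \<subseteq> cantor_set" unfolding K_def cantor_set_eq_range by auto
  ultimately have "closedin (top_of_set cantor_set) K"
    and "closedin (top_of_set cantor_set) (cantor_set - K)"
    by (auto intro: closed_subset)
  then have "closedin (top_of_set cantor_set) K" "openin (top_of_set cantor_set) K"
    using \<open>K \<subseteq> cantor_set\<close> by (auto simp: openin_closedin_eq)
  then show "\<exists>U V. openin (top_of_set cantor_set) U \<and>
          (closedin (top_of_set cantor_set) V \<and> openin (top_of_set cantor_set) V) \<and>
          x \<in> U \<and> U \<subseteq> V \<and> V \<subseteq> W"
    using xK KW by blast
qed

lemma homeomorphic_imp_homeomorphic_space: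
  assumes "S homeomorphic T" shows "top_of_set S homeomorphic_space top_of_set T"
proof -
  obtain f g where "homeomorphism S T f g" using assms by (auto simp: homeomorphic_def)
  then have "homeomorphic_maps (top_of_set S) (top_of_set T) f g"
    unfolding homeomorphism_def homeomorphic_maps_def by (auto simp: continuous_map_in_subtopology)
  then show ?thesis unfolding homeomorphic_space_def by blast
qed

lemma small_clopen_neighbourhood:
  assumes "top_of_set S dim_le 0" "x \<in> S" "\<delta> > 0"
  obtains K where "closedin (top_of_set S) K" "openin (top_of_set S) K" "x \<in> K" "K \<subseteq> ball x \<delta>"
proof -
  have "openin (top_of_set S) (S \<inter> ball x \<delta>) \<and> x \<in> S \<inter> ball x \<delta>"
    using assms by (auto simp: openin_open_Int)
  then obtain U V where "openin (top_of_set S) U" "closedin (top_of_set S) V" "openin (top_of_set S) V"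
    "x \<in> U" "U \<subseteq> V" "V \<subseteq> S \<inter> ball x \<delta>"
    using assms(1) unfolding dimension_le_0_neighbourhood_base_of_clopen neighbourhood_base_of by meson
  then show ?thesis using that by blast
qed

text \<open>Let L be an LC-set of Y containing y.  If points of Y \<inter> cl S outside L come
  arbitrarily close to y, then already points of S outside L converge to y: near y
  they avoid the closed part of L, and so do nearby points of S.\<close>
lemma escaping_sequence:
  fixes Y :: "'a::metric_space set"
  assumes "lc_set (top_of_set Y) L" and "y \<in> L" and "S \<subseteq> Y"
    and near: "\<And>\<epsilon>. \<epsilon> > 0 \<Longrightarrow> \<exists>z\<in>Y \<inter> closure S. dist z y < \<epsilon> \<and> z \<notin> L"
  obtains w where "\<And>j. w j \<in> S - L" and "w \<longlonglongrightarrow> y"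
proof -
  obtain V F where V: "openin (top_of_set Y) V" and F: "closedin (top_of_set Y) F"
    and L: "L = V \<inter> F"
    using assms(1) unfolding lc_set_def by blast
  obtain \<epsilon>0 where e0: "\<epsilon>0 > 0" and e0V: "\<And>z. z \<in> Y \<Longrightarrow> dist z y < \<epsilon>0 \<Longrightarrow> z \<in> V"
    using V assms(2) L by (force simp: openin_euclidean_subtopology_iff)
  have approx: "\<exists>w \<in> S - L. dist w y < \<epsilon>" if "\<epsilon> > 0" for \<epsilon>
  proof -
    obtain z where zY: "z \<in> Y" and zS: "z \<in> closure S" and zy: "dist z y < min \<epsilon>0 (\<epsilon>/2)"
      and zL: "z \<notin> L"
      using near[of "min \<epsilon>0 (\<epsilon>/2)"] e0 \<open>\<epsilon> > 0\<close> by auto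
    have "z \<in> Y - F" using e0V[OF zY] zY zy zL L by auto
    moreover have "openin (top_of_set Y) (Y - F)" using F by (simp add: openin_diff)
    ultimately obtain \<rho> where rho: "\<rho> > 0" and rhoF: "\<And>w. w \<in> Y \<Longrightarrow> dist w z < \<rho> \<Longrightarrow> w \<notin> F"
      by (force simp: openin_euclidean_subtopology_iff)
    obtain w where wS: "w \<in> S" and wz: "dist w z < min \<rho> (\<epsilon>/2)"
      using zS rho \<open>\<epsilon> > 0\<close> unfolding closure_approachable by (metis min_less_iff_conj half_gt_zero)
    have "w \<notin> L" using rhoF[of w] wS wz assms(3) L by auto
    moreover have "dist w y < \<epsilon>" using dist_triangle[of w y z] wz zy by simp
    ultimately show ?thesis using wS by blast
  qed
  have "\<forall>j. \<exists>w. w \<in> S - L \<and> dist w y < inverse (Suc j)"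
    using approx[of "inverse (Suc _)"] by (metis Diff_iff inverse_positive_iff_positive of_nat_0_less_iff zero_less_Suc)
  then obtain w where "\<forall>j. w j \<in> S - L \<and> dist (w j) y < inverse (Suc j)"
    by (auto dest!: choice)
  then have w: "\<And>j. w j \<in> S - L" and wy: "\<And>j. dist (w j) y < inverse (Suc j)"
    by auto
  have "(\<lambda>j. dist (w j) y) \<longlonglongrightarrow> 0"
  proof (rule tendsto_sandwich[OF _ _ tendsto_const LIMSEQ_inverse_real_of_nat])
    show "\<forall>\<^sub>F j in sequentially. 0 \<le> dist (w j) y" by simp
    show "\<forall>\<^sub>F j in sequentially. dist (w j) y \<le> inverse (real (Suc j))"
      using wy by (simp add: less_imp_le del: of_nat_Suc)
  qed
  then have "w \<longlonglongrightarrow> y" by (rule tendsto_dist_iff[THEN iffD2])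
  then show ?thesis using that w by blast
qed

lemma bad_image_witness:
  assumes "w \<in> f ` bad_part C X Y f n"
  shows "\<exists>xk xt. (\<forall>k. xk k \<in> X) \<and> (\<lambda>k. f (xk k)) \<longlonglongrightarrow> w \<and> xt \<in> C \<and> xk \<longlonglongrightarrow> xt \<and>
           infdist xt {x \<in> X. f x = w} > 1 / real n"
proof -
  obtain y yk xk xt where "w = y" "\<forall>k. xk k \<in> X \<and> f (xk k) = yk k" "yk \<longlonglongrightarrow> y"
      "xt \<in> C" "xk \<longlonglongrightarrow> xt" "infdist xt {x \<in> X. f x = y} > 1 / real n"
    using assms unfolding bad_part_def by auto
  then show ?thesis by (intro exI[of _ xk] exI[of _ xt]) auto
qed

lemma convergent_bad_witnesses:
  fixes w :: "nat \<Rightarrow> 'a::metric_space"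
  assumes "compact C" and "\<And>j. w j \<in> f ` bad_part C X Y f n"
  obtains r x0 xt xk where "strict_mono r" and "x0 \<in> C" and "xt \<longlonglongrightarrow> x0"
    and "\<And>j k. xk j k \<in> X" and "\<And>j. (\<lambda>k. f (xk j k)) \<longlonglongrightarrow> w (r j)"
    and "\<And>j. xk j \<longlonglongrightarrow> xt j"
    and "\<And>j. infdist (xt j) {x \<in> X. f x = w (r j)} > 1 / real n"
proof -
  define witness where "witness j xk xt \<longleftrightarrow> (\<forall>k. xk k \<in> X) \<and> (\<lambda>k. f (xk k)) \<longlonglongrightarrow> w j \<and>
      xt \<in> C \<and> xk \<longlonglongrightarrow> xt \<and> infdist xt {x \<in> X. f x = w j} > 1 / real n" for j xk xt
  have "\<forall>j. \<exists>xk xt. witness j xk xt"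
    using bad_image_witness[OF assms(2)] unfolding witness_def by blast
  then obtain XK where "\<forall>j. \<exists>xt. witness j (XK j) xt" by (auto dest!: choice)
  then obtain XT where "\<forall>j. witness j (XK j) (XT j)" by (auto dest!: choice)
  then have XK: "\<And>j k. XK j k \<in> X" "\<And>j. (\<lambda>k. f (XK j k)) \<longlonglongrightarrow> w j"
    and XT: "\<And>j. XT j \<in> C" "\<And>j. XK j \<longlonglongrightarrow> XT j"
    and far: "\<And>j. infdist (XT j) {x \<in> X. f x = w j} > 1 / real n"
    unfolding witness_def by auto
  obtain x0 r where "x0 \<in> C" "strict_mono r" "(XT \<circ> r) \<longlonglongrightarrow> x0"
    using seq_compactE[OF compact_imp_seq_compact[OF assms(1)], of XT] XT(1) by blast
  then show ?thesis
    by (intro that[of r x0 "XT \<circ> r" "XK \<circ> r"]) (simp_all add: XK XT far)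
qed

text \<open>A clopen piece Q
  near the limit x0 and the LC-set f(K \<union> Q) force v_j into f(Q), i.e. the fibre of v_j
  comes within 1/n of its far limit point.\<close>
lemma far_fibres_cannot_approach_clopen_image:
  fixes C X Y :: "'a::metric_space set" and f :: "'a \<Rightarrow> 'a"
    and v :: "nat \<Rightarrow> 'a" and xt :: "nat \<Rightarrow> 'a" and xk :: "nat \<Rightarrow> nat \<Rightarrow> 'a"
  assumes dC: "top_of_set C dim_le 0" and XC: "X \<subseteq> C"
    and LC: "clopen_LC (top_of_set X) (top_of_set Y) f" and n: "n \<ge> 1"
    and Kc: "closedin (top_of_set X) K" and Ko: "openin (top_of_set X) K" and yK: "y \<in> f ` K"
    and v: "\<And>j. v j \<in> Y - f ` K" and v_lim: "v \<longlonglongrightarrow> y"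
    and x0: "x0 \<in> C" and xt_lim: "xt \<longlonglongrightarrow> x0"
    and xk: "\<And>j k. xk j k \<in> X" and fxk_lim: "\<And>j. (\<lambda>k. f (xk j k)) \<longlonglongrightarrow> v j"
    and xk_lim: "\<And>j. xk j \<longlonglongrightarrow> xt j"
    and far: "\<And>j. infdist (xt j) {x \<in> X. f x = v j} > 1 / real n"
  shows False
proof -
  define \<rho> where "\<rho> = 1 / (2 * real n)"
  have \<rho>: "\<rho> > 0" "\<rho> + \<rho> = 1 / real n" using n by (simp_all add: \<rho>_def)
  obtain Q0 where Q0c: "closedin (top_of_set C) Q0" and Q0o: "openin (top_of_set C) Q0"
    and x0Q0: "x0 \<in> Q0" and Q0_small: "Q0 \<subseteq> ball x0 \<rho>"
    using small_clopen_neighbourhood[OF dC x0 \<rho>(1)] by blast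
  obtain N where N: "open N" and Q0N: "Q0 = C \<inter> N" using Q0o by (auto simp: openin_open)
  obtain G where G: "closed G" and Q0G: "Q0 = C \<inter> G" using Q0c by (auto simp: closedin_closed)
  define Q where "Q = X \<inter> Q0"
  have QN: "Q = X \<inter> N" unfolding Q_def Q0N using XC by auto
  have QG: "Q = X \<inter> G" unfolding Q_def Q0G using XC by auto
  have Qo: "openin (top_of_set X) Q" using N QN by (simp add: openin_open_Int)
  have Qc: "closedin (top_of_set X) Q" using G QG by (simp add: closedin_closed_Int)
  obtain V F where V: "openin (top_of_set Y) V" and F: "closedin (top_of_set Y) F"
    and fKQ: "f ` (K \<union> Q) = V \<inter> F"
    using LC openin_Un[OF Ko Qo] closedin_Un[OF Kc Qc] unfolding clopen_LC_def lc_set_def by blast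
  obtain U where U: "open U" and VU: "V = Y \<inter> U" using V by (auto simp: openin_open)
  obtain H where H: "closed H" and FH: "F = Y \<inter> H" using F by (auto simp: closedin_closed)
  have "y \<in> U" using yK fKQ VU by auto
  have "x0 \<in> N" using x0Q0 Q0N by simp
  have "\<forall>\<^sub>F j in sequentially. v j \<in> U \<and> xt j \<in> N \<and> dist (xt j) x0 < \<rho>"
    using topological_tendstoD[OF v_lim U \<open>y \<in> U\<close>] topological_tendstoD[OF xt_lim N \<open>x0 \<in> N\<close>]
      tendstoD[OF xt_lim \<rho>(1)]
    by (intro eventually_conj)
  then obtain J where "\<forall>j\<ge>J. v j \<in> U \<and> xt j \<in> N \<and> dist (xt j) x0 < \<rho>"
    unfolding eventually_sequentially by blast
  then have vU: "v J \<in> U" and xtN: "xt J \<in> N" and xt_near: "dist (xt J) x0 < \<rho>"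
    by auto
  txt \<open>The witnesses for \<open>v J\<close> eventually lie in \<open>Q\<close>, so \<open>v J\<close> lies in the closed set \<open>H\<close>.\<close>
  have "\<forall>\<^sub>F k in sequentially. f (xk J k) \<in> H"
  proof (rule eventually_mono[OF topological_tendstoD[OF xk_lim N xtN]])
    fix k assume "xk J k \<in> N"
    then have "xk J k \<in> Q" using xk XC QN by auto
    then show "f (xk J k) \<in> H" using fKQ FH by auto
  qed
  then have "v J \<in> H" using Lim_in_closed_set[OF H _ _ fxk_lim] by simp
  then have "v J \<in> f ` (K \<union> Q)" using fKQ VU FH v vU by auto
  then obtain q where qQ: "q \<in> Q" and vq: "v J = f q" using v by auto
  txt \<open>But then the fibre over \<open>v J\<close> meets \<open>Q\<close>, which is within \<open>1/n\<close> of \<open>xt J\<close>.\<close>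
  have "q \<in> {x \<in> X. f x = v J}" using qQ vq Q_def by auto
  then have "infdist (xt J) {x \<in> X. f x = v J} \<le> dist (xt J) q" by (rule infdist_le)
  also have "\<dots> \<le> dist (xt J) x0 + dist x0 q" by (rule dist_triangle)
  also have "\<dots> < 1 / real n"
    using xt_near qQ Q_def Q0_small \<rho>(2) by (auto simp: dist_commute)
  finally show False using far[of J] by simp
qed

lemma clopen_image_neighbourhood:
  fixes C X Y :: "'a::metric_space set" and f :: "'a \<Rightarrow> 'a"
  assumes cC: "compact C" and dC: "top_of_set C dim_le 0" and XC: "X \<subseteq> C" and fXY: "f ` X = Y"
    and LC: "clopen_LC (top_of_set X) (top_of_set Y) f" and n: "n \<ge> 1"
    and Kc: "closedin (top_of_set X) K" and Ko: "openin (top_of_set X) K" and xK: "x \<in> K"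
  shows "\<exists>\<epsilon>>0. \<forall>z \<in> Y \<inter> closure (f ` bad_part C X Y f n). dist z (f x) < \<epsilon> \<longrightarrow> z \<in> f ` K"
proof (rule ccontr)
  define B where "B = f ` bad_part C X Y f n"
  assume "\<not> ?thesis"
  then have near: "\<And>\<epsilon>. \<epsilon> > 0 \<Longrightarrow> \<exists>z \<in> Y \<inter> closure B. dist z (f x) < \<epsilon> \<and> z \<notin> f ` K"
    unfolding B_def by blast
  have lc: "lc_set (top_of_set Y) (f ` K)" using LC Kc Ko unfolding clopen_LC_def by blast
  have BY: "B \<subseteq> Y" using fXY unfolding B_def bad_part_def by auto
  obtain w where w: "\<And>j. w j \<in> B - f ` K" and w_lim: "w \<longlonglongrightarrow> f x"
    using escaping_sequence[OF lc _ BY near] xK by blast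
  have wB: "\<And>j. w j \<in> f ` bad_part C X Y f n" using w unfolding B_def by blast
  obtain r x0 xt xk where r: "strict_mono r" and x0: "x0 \<in> C" "xt \<longlonglongrightarrow> x0"
    and xk: "\<And>j k. xk j k \<in> X" "\<And>j. (\<lambda>k. f (xk j k)) \<longlonglongrightarrow> w (r j)" "\<And>j. xk j \<longlonglongrightarrow> xt j"
    and far: "\<And>j. infdist (xt j) {x \<in> X. f x = w (r j)} > 1 / real n"
    using convergent_bad_witnesses[where w = w, OF cC wB] by blast
  have "\<And>j. (w \<circ> r) j \<in> Y - f ` K" using w BY by auto
  moreover have "(w \<circ> r) \<longlonglongrightarrow> f x" by (rule LIMSEQ_subseq_LIMSEQ[OF w_lim r])
  moreover have "\<And>j. (\<lambda>k. f (xk j k)) \<longlonglongrightarrow> (w \<circ> r) j"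
    and "\<And>j. infdist (xt j) {x \<in> X. f x = (w \<circ> r) j} > 1 / real n"
    using xk(2) far by simp_all
  ultimately show False
    by (rule far_fibres_cannot_approach_clopen_image[OF dC XC LC n Kc Ko imageI[OF xK] _ _ x0 xk(1) _ xk(3)])
qed

lemma open_map_over_bad_closure:
  fixes C X Y :: "'a::metric_space set" and f :: "'a \<Rightarrow> 'a"
  assumes cC: "compact C" and dC: "top_of_set C dim_le 0" and XC: "X \<subseteq> C" and fXY: "f ` X = Y"
    and LC: "clopen_LC (top_of_set X) (top_of_set Y) f" and n: "n \<ge> 1"
  defines "Z \<equiv> Y \<inter> closure (f ` bad_part C X Y f n)"
  shows "open_map (top_of_set {x \<in> X. f x \<in> Z}) (top_of_set Z) f"
  unfolding open_map_def
proof (intro allI impI)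
  fix U assume U: "openin (top_of_set {x \<in> X. f x \<in> Z}) U"
  have dX: "top_of_set X dim_le 0"
    using dimension_le_subtopology[OF dC, of X] XC by (simp add: subtopology_subtopology Int_absorb1)
  have "\<exists>\<epsilon>>0. \<forall>z\<in>Z. dist z y < \<epsilon> \<longrightarrow> z \<in> f ` U" if "y \<in> f ` U" for y
  proof -
    obtain x where xU: "x \<in> U" and yx: "y = f x" using \<open>y \<in> f ` U\<close> by auto
    obtain \<delta> where \<delta>: "\<delta> > 0"
      and \<delta>U: "\<And>x'. x' \<in> {x \<in> X. f x \<in> Z} \<Longrightarrow> dist x' x < \<delta> \<Longrightarrow> x' \<in> U"
      using U xU by (force simp: openin_euclidean_subtopology_iff)
    have "x \<in> X" using U xU openin_imp_subset by fastforce
    then obtain K where Kc: "closedin (top_of_set X) K" and Ko: "openin (top_of_set X) K"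
      and xK: "x \<in> K" and K_small: "K \<subseteq> ball x \<delta>"
      using small_clopen_neighbourhood[OF dX _ \<delta>] by blast
    obtain \<epsilon> where \<epsilon>: "\<epsilon> > 0" and \<epsilon>K: "\<forall>z\<in>Z. dist z (f x) < \<epsilon> \<longrightarrow> z \<in> f ` K"
      using clopen_image_neighbourhood[OF cC dC XC fXY LC n Kc Ko xK] unfolding Z_def by blast
    have "z \<in> f ` U" if zZ: "z \<in> Z" and zy: "dist z y < \<epsilon>" for z
    proof -
      obtain k where "k \<in> K" "z = f k" using \<epsilon>K zZ zy yx by auto
      moreover have "k \<in> X" using \<open>k \<in> K\<close> Ko openin_imp_subset by fastforce
      ultimately show ?thesis
        using \<delta>U[of k] K_small zZ by (auto simp: dist_commute)
    qed
    then show ?thesis using \<epsilon> by blast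
  qed
  moreover have "f ` U \<subseteq> Z" using U openin_imp_subset by fastforce
  ultimately show "openin (top_of_set Z) (f ` U)"
    by (auto simp: openin_euclidean_subtopology_iff)
qed

text \<open>The Cantor set is compact and zero-dimensional, and so is the homeomorphic space C.\<close>
theorem lemma3:
  fixes C X Y :: "'a::metric_space set" and f :: "'a \<Rightarrow> 'a"
  assumes "C homeomorphic cantor_set"
    and "X \<subseteq> C" and "Y \<subseteq> C"
    and "continuous_on X f" and "f ` X = Y"
    and "clopen_LC (top_of_set X) (top_of_set Y) f"
    and "\<forall>y\<in>Y. compact {x \<in> X. f x = y}"
    and "n \<ge> 1"
  shows "open_map (top_of_set {x \<in> X. f x \<in> Y \<inter> closure (f ` bad_part C X Y f n)})
                  (top_of_set (Y \<inter> closure (f ` bad_part C X Y f n))) f"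
proof -
  have "compact C"
    using assms(1) compact_cantor_set homeomorphic_compactness by blast
  moreover have "top_of_set C dim_le 0"
    using homeomorphic_space_dimension_le[OF homeomorphic_imp_homeomorphic_space[OF assms(1)]]
      cantor_set_zero_dimensional by blast
  ultimately show ?thesis
    using open_map_over_bad_closure assms(2,5,6,8) by blast
qed

end
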